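(* Let $G$ be a finite subgroup of $O(2)\times O(2)\times O(2)$. If the Fitting subgroup $F(G)$ is cyclic, then $G$ belongs to $\mathcal{G}_{1}^{2}$, i.e. $G$ has a cyclic normal subgroup $H$ such that $G/H$ is a $2$-group.
   Context: The Fitting subgroup $F(G)$ is the unique largest nilpotent normal subgroup of $G$. For primes $p,q$, $\mathcal{G}_p^q$ is the class of finite groups $G$ with a normal series $P\trianglelefteq H\trianglelefteq G$ where $P$ is a $p$-group, $H/P$ is cyclic and $G/H$ is a $q$-group; $p=1$ means $P$ is trivial. *)

theory Defs
  imports "HOL-Analysis.Analysis" "HOL-Algebra.Algebra"
begin

definition O2 :: "(real^2^2) monoid" where
  "O2 = \<lparr>carrier = {A. orthogonal_matrix A}, mult = (\<lambda>A B. A ** B), one = mat 1\<rparr>"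

definition O2cube :: "((real^2^2) \<times> (real^2^2) \<times> (real^2^2)) monoid" where
  "O2cube = O2 \<times>\<times> O2 \<times>\<times> O2"

definition commutator_subgroup :: "('a, 'b) monoid_scheme \<Rightarrow> 'a set \<Rightarrow> 'a set \<Rightarrow> 'a set" where
  "commutator_subgroup G A B =
     generate G {x \<otimes>\<^bsub>G\<^esub> y \<otimes>\<^bsub>G\<^esub> inv\<^bsub>G\<^esub> x \<otimes>\<^bsub>G\<^esub> inv\<^bsub>G\<^esub> y | x y. x \<in> A \<and> y \<in> B}"

fun lower_central :: "('a, 'b) monoid_scheme \<Rightarrow> nat \<Rightarrow> 'a set" where
  "lower_central G 0 = carrier G"
| "lower_central G (Suc n) = commutator_subgroup G (lower_central G n) (carrier G)"

definition nilpotent_group :: "('a, 'b) monoid_scheme \<Rightarrow> bool" where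
  "nilpotent_group G \<longleftrightarrow> group G \<and> (\<exists>n. lower_central G n = {\<one>\<^bsub>G\<^esub>})"

text \<open>Fitting subgroup: the subgroup generated by all nilpotent normal subgroups
  (for finite groups this is the unique largest nilpotent normal subgroup).\<close>
definition fitting_subgroup :: "('a, 'b) monoid_scheme \<Rightarrow> 'a set" where
  "fitting_subgroup G =
     generate G (\<Union>{N. N \<lhd> G \<and> nilpotent_group (G\<lparr>carrier := N\<rparr>)})"

end

theory Submission
  imports Defs
begin

text \<open>The determinant map \<open>G \<rightarrow> {\<plusminus>1}\<^sup>3\<close> has kernel \<open>R = G \<inter> SO(2)\<^sup>3\<close>, which is abelian
  because plane rotations commute. So \<open>R\<close> is a nilpotent normal subgroup and lies in \<open>F(G)\<close>;
  hence \<open>[G : F(G)]\<close> divides \<open>[G : R]\<close>, which divides 8, and the cyclic group \<open>F(G)\<close>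
  itself is the required normal subgroup.\<close>

lemma commutator_subgroup_self_eq_derived:
  "commutator_subgroup G H H = derived G H"
  unfolding commutator_subgroup_def derived_def by (rule arg_cong[where f = "generate G"]) auto

lemma (in comm_group) nilpotent_group: "nilpotent_group G"
proof -
  have "lower_central G (Suc 0) = {\<one>}"
    by (simp add: commutator_subgroup_self_eq_derived derived_eq_singleton)
  then show ?thesis
    unfolding nilpotent_group_def using is_group by blast
qed

lemma (in group) fitting_subgroup_normal: "fitting_subgroup G \<lhd> G"
  unfolding fitting_subgroup_def
proof (rule normal_generateI)
  show "\<Union>{N. N \<lhd> G \<and> nilpotent_group (G\<lparr>carrier := N\<rparr>)} \<subseteq> carrier G"
    by (auto dest: normal_imp_subgroup subgroup.subset)
next
  fix h g
  assume "h \<in> \<Union>{N. N \<lhd> G \<and> nilpotent_group (G\<lparr>carrier := N\<rparr>)}" and "g \<in> carrier G"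
  then obtain N where "N \<lhd> G" "nilpotent_group (G\<lparr>carrier := N\<rparr>)" "h \<in> N" "g \<in> carrier G"
    by blast
  then show "g \<otimes> h \<otimes> inv g \<in> \<Union>{N. N \<lhd> G \<and> nilpotent_group (G\<lparr>carrier := N\<rparr>)}"
    by (auto dest: normal.inv_op_closed2)
qed

lemma nilpotent_normal_subset_fitting_subgroup:
  assumes "N \<lhd> G" and "nilpotent_group (G\<lparr>carrier := N\<rparr>)"
  shows "N \<subseteq> fitting_subgroup G"
  unfolding fitting_subgroup_def using assms by (blast intro: generate.incl)

lemma (in group) card_rcosets_dvd_of_subset:
  assumes "finite (carrier G)" and "subgroup H G" and "subgroup K G" and "H \<subseteq> K"
  shows "card (rcosets K) dvd card (rcosets H)"
proof -
  have "subgroup H (G\<lparr>carrier := K\<rparr>)"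
    using assms(2-4) by (rule subgroup_incl)
  then have index_H_in_K: "card (rcosets\<^bsub>G\<lparr>carrier := K\<rparr>\<^esub> H) * card H = card K"
    using group.lagrange[OF subgroup_imp_group[OF assms(3)]] by (simp add: order_def)
  have "card (rcosets H) * card H = card (rcosets K) * card K"
    using lagrange assms(2,3) by simp
  also have "\<dots> = card (rcosets K) * card (rcosets\<^bsub>G\<lparr>carrier := K\<rparr>\<^esub> H) * card H"
    by (simp flip: index_H_in_K)
  finally have "card (rcosets H) = card (rcosets K) * card (rcosets\<^bsub>G\<lparr>carrier := K\<rparr>\<^esub> H)"
    using finite_subset[OF subgroup.subset[OF assms(2)] assms(1)] subgroup.one_closed[OF assms(2)]
    by auto
  then show ?thesis by simp
qed

lemma (in group) card_rcosets_fitting_subgroup_dvd: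
  assumes "finite (carrier G)" and "N \<lhd> G" and "nilpotent_group (G\<lparr>carrier := N\<rparr>)"
  shows "card (rcosets (fitting_subgroup G)) dvd card (rcosets N)"
  using card_rcosets_dvd_of_subset[OF assms(1)] nilpotent_normal_subset_fitting_subgroup[OF assms(2,3)]
    normal_imp_subgroup[OF assms(2)] normal_imp_subgroup[OF fitting_subgroup_normal]
  by blast

lemma (in group_hom) card_rcosets_kernel_dvd_order:
  "card (rcosets\<^bsub>G\<^esub> kernel G H h) dvd order H"
proof -
  let ?I = "H\<lparr>carrier := h ` carrier G\<rparr>"
  have image: "subgroup (h ` carrier G) H"
    using img_is_subgroup .
  have "group_hom G ?I h"
    using image by (auto simp: group_hom_def group_hom_axioms_def hom_def
                         intro: G.is_group H.subgroup_imp_group)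
  then have "G Mod kernel G ?I h \<cong> ?I"
    by (intro group_hom.FactGroup_iso) simp_all
  then have "card (rcosets\<^bsub>G\<^esub> kernel G H h) = card (h ` carrier G)"
    by (auto dest!: iso_same_card simp: FactGroup_def kernel_def)
  then show ?thesis
    using H.lagrange[OF image] by (metis dvd_triv_right)
qed

lemma map_prod_hom:
  assumes "f \<in> hom G G'" and "g \<in> hom H H'"
  shows "map_prod f g \<in> hom (G \<times>\<times> H) (G' \<times>\<times> H')"
  using assms by (auto simp: hom_def)

lemma rotation_matrix_entries:
  fixes M :: "real^2^2"
  assumes "orthogonal_matrix M" and "det M = 1"
  shows "M$2$2 = M$1$1 \<and> M$2$1 = - M$1$2"
proof -
  have "M ** transpose M = mat 1"
    using assms(1) by (simp add: orthogonal_matrix_def)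
  then have rows: "M$1$1^2 + M$1$2^2 = 1" "M$2$1^2 + M$2$2^2 = 1"
    by (simp_all add: vec_eq_iff forall_2 matrix_matrix_mult_def sum_2 transpose_def mat_def
                      power2_eq_square)
  have "M$1$1 * M$2$2 - M$1$2 * M$2$1 = 1"
    using assms(2) by (simp add: det_2)
  \<comment> \<open>the two row norms minus twice the determinant\<close>
  then have "(M$1$1 - M$2$2)^2 + (M$1$2 + M$2$1)^2 = 0"
    using rows by (simp add: power2_eq_square algebra_simps)
  then show ?thesis
    by simp
qed

lemma rotation_matrices_commute:
  fixes A B :: "real^2^2"
  assumes "orthogonal_matrix A" "det A = 1" "orthogonal_matrix B" "det B = 1"
  shows "A ** B = B ** A"
  using rotation_matrix_entries[OF assms(1,2)] rotation_matrix_entries[OF assms(3,4)]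
  by (simp add: vec_eq_iff forall_2 matrix_matrix_mult_def sum_2 algebra_simps)

lemma group_O2: "group O2"
proof (rule groupI)
  fix A assume "A \<in> carrier O2"
  then show "\<exists>B\<in>carrier O2. B \<otimes>\<^bsub>O2\<^esub> A = \<one>\<^bsub>O2\<^esub>"
    by (intro bexI[of _ "transpose A"])
       (auto simp: O2_def orthogonal_matrix_def)
qed (auto simp: O2_def orthogonal_matrix_mul orthogonal_matrix_id matrix_mul_assoc)

lemma group_O2cube: "group O2cube"
  unfolding O2cube_def by (intro DirProd_group group_O2)

definition sign_group :: "real monoid" where
  "sign_group = \<lparr>carrier = {-1, 1}, mult = (*), one = 1\<rparr>"

lemma group_sign_group: "group sign_group"
proof (rule groupI)
  fix x assume "x \<in> carrier sign_group"
  then show "\<exists>y\<in>carrier sign_group. y \<otimes>\<^bsub>sign_group\<^esub> x = \<one>\<^bsub>sign_group\<^esub>"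
    by (intro bexI[of _ x]) (auto simp: sign_group_def)
qed (auto simp: sign_group_def)

lemma det_hom_O2: "det \<in> hom O2 sign_group"
  using det_orthogonal_matrix by (auto simp: hom_def O2_def sign_group_def det_mul)

definition sign_cube :: "(real \<times> real \<times> real) monoid" where
  "sign_cube = sign_group \<times>\<times> sign_group \<times>\<times> sign_group"

lemma group_sign_cube: "group sign_cube"
  unfolding sign_cube_def by (intro DirProd_group group_sign_group)

lemma order_sign_cube: "order sign_cube = 8"
  by (simp add: order_def sign_cube_def sign_group_def card_cartesian_product)

definition dets :: "(real^2^2) \<times> (real^2^2) \<times> (real^2^2) \<Rightarrow> real \<times> real \<times> real" where
  "dets = map_prod det (map_prod det det)"

lemma dets_hom_O2cube: "dets \<in> hom O2cube sign_cube"
  unfolding dets_def O2cube_def sign_cube_def by (intro map_prod_hom det_hom_O2)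

lemma dets_one_commute:
  assumes "x \<in> carrier O2cube" "dets x = (1, 1, 1)"
    and "y \<in> carrier O2cube" "dets y = (1, 1, 1)"
  shows "x \<otimes>\<^bsub>O2cube\<^esub> y = y \<otimes>\<^bsub>O2cube\<^esub> x"
  using assms
  by (auto simp: O2cube_def O2_def dets_def DirProd_def intro!: rotation_matrices_commute)

lemma group_hom_dets:
  assumes "subgroup S O2cube"
  shows "group_hom (O2cube\<lparr>carrier := S\<rparr>) sign_cube dets"
  using group.subgroup_imp_group[OF group_O2cube assms] group_sign_cube dets_hom_O2cube
    subgroup.subset[OF assms]
  by (auto simp: group_hom_def group_hom_axioms_def hom_def)

lemma comm_group_kernel_dets:
  assumes "subgroup S O2cube"
  defines "G \<equiv> O2cube\<lparr>carrier := S\<rparr>"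
  shows "comm_group (G\<lparr>carrier := kernel G sign_cube dets\<rparr>)"
proof (rule group.group_comm_groupI)
  interpret dets: group_hom G sign_cube dets
    unfolding G_def using assms(1) by (rule group_hom_dets)
  show "group (G\<lparr>carrier := kernel G sign_cube dets\<rparr>)"
    using dets.normal_kernel normal_imp_subgroup dets.G.subgroup_imp_group by blast
  fix x y
  assume "x \<in> carrier (G\<lparr>carrier := kernel G sign_cube dets\<rparr>)"
    and "y \<in> carrier (G\<lparr>carrier := kernel G sign_cube dets\<rparr>)"
  then have "x \<in> S" "dets x = (1, 1, 1)" "y \<in> S" "dets y = (1, 1, 1)"
    by (auto simp: kernel_def G_def sign_cube_def sign_group_def)
  then show "x \<otimes>\<^bsub>G\<lparr>carrier := kernel G sign_cube dets\<rparr>\<^esub> y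
           = y \<otimes>\<^bsub>G\<lparr>carrier := kernel G sign_cube dets\<rparr>\<^esub> x"
    using subgroup.subset[OF assms(1)] by (auto simp: G_def intro: dets_one_commute)
qed

theorem proposition2p8:
  fixes S :: "((real^2^2) \<times> (real^2^2) \<times> (real^2^2)) set"
  assumes "subgroup S O2cube"
    and "finite S"
    and "cyclic_group ((O2cube\<lparr>carrier := S\<rparr>)\<lparr>carrier := fitting_subgroup (O2cube\<lparr>carrier := S\<rparr>)\<rparr>)"
  shows "\<exists>H. H \<lhd> (O2cube\<lparr>carrier := S\<rparr>)
           \<and> cyclic_group ((O2cube\<lparr>carrier := S\<rparr>)\<lparr>carrier := H\<rparr>)
           \<and> (\<exists>k::nat. order ((O2cube\<lparr>carrier := S\<rparr>) Mod H) = 2 ^ k)"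
proof -
  define G where "G = O2cube\<lparr>carrier := S\<rparr>"
  define F where "F = fitting_subgroup G"
  interpret dets: group_hom G sign_cube dets
    unfolding G_def using assms(1) by (rule group_hom_dets)
  have "card (rcosets\<^bsub>G\<^esub> F) dvd card (rcosets\<^bsub>G\<^esub> kernel G sign_cube dets)"
    unfolding F_def
    using dets.G.card_rcosets_fitting_subgroup_dvd assms(2) dets.normal_kernel
      comm_group.nilpotent_group[OF comm_group_kernel_dets[OF assms(1)]]
    by (simp add: G_def)
  also have "\<dots> dvd 2 ^ 3"
    using dets.card_rcosets_kernel_dvd_order by (simp add: order_sign_cube)
  finally obtain k where "card (rcosets\<^bsub>G\<^esub> F) = 2 ^ k"
    unfolding divides_primepow_nat[OF two_is_prime_nat] by blast
  then have "order (G Mod F) = 2 ^ k"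
    by (simp add: order_def FactGroup_def)
  then show ?thesis
    using dets.G.fitting_subgroup_normal assms(3) unfolding G_def F_def by blast
qed

end
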